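(* Let $f\in S(\mathcal{P},\nu,\rho,d,C)$, let $(f_z)_{z\in Z}$ be fidelity approximations with cost-to-bias function $\Phi$, and run Kometo with budget $\Lambda\ge1$. Let $\Psi$ be a non-increasing function with $\Phi\le\Psi$, let $j$ be a non-negative integer and $\tilde h$ a positive real number such that (1) $\Psi(e^j)\le\nu\rho^{\tilde h}$ and (2) $\frac{\tilde\Lambda}{4\tilde h e^j}\ge C\rho^{-d\tilde h}$, where $\tilde\Lambda=\left\lfloor\frac{(e-1)\Lambda}{2Ke(\log\Lambda+1)^2}\right\rfloor$. Then the simple regret of Kometo satisfies $r_\Lambda\le\frac{3\nu}{\rho}\rho^{\tilde h}+2\Psi(\tilde\Lambda)$.
   Context: $\mathcal{X}$ has a hierarchical partitioning $\mathcal{P}=(\mathcal{P}_{h,i})_{h\ge0,0\le i\le K^h-1}$, $K\ge2$: $\mathcal{P}_{0,0}=\mathcal{X}$, the children $\mathcal{P}_{h+1,Ki+l}$ ($0\le l\le K-1$) of $\mathcal{P}_{h,i}$ partition it; each cell has a representative $x_{h,i}\in\mathcal{P}_{h,i}$. $\nu>0$, $\rho\in(0,1)$, $d\ge0$, $C>1$. $S(\mathcal{P},\nu,\rho,d,C)$: set of $f:\mathcal{X}\to\mathbb{R}$ such that for one global maximizer $x^\star$ and all $h$, each $x$ in the depth-$h$ cell containing $x^\star$ has $f(x)\ge f(x^\star)-\nu\rho^h$, and for every $h$ at most $C\rho^{-dh}$ depth-$h$ cells $\mathcal{P}_{h,i}$ satisfy $\sup_{\mathcal{P}_{h,i}}f\ge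 f(x^\star)-3\nu\rho^h$. Multi-fidelity: $Z=[0,1]$, $f_z:\mathcal{X}\to\mathbb{R}$, bias $\zeta:Z\to[0,+\infty]$ with strictly increasing $g_z$ and $\sup_x|f(x)-g_z(f_z(x))|\le\zeta(z)$, cost $\lambda$, and for each $c\ge1$ an available fidelity $z_c$ with $\lambda(z_c)\le c$; cost-to-bias function $\Phi(c)=\zeta(z_c)$ on $[1,\infty)$. Simple regret $r_\Lambda=\mathbb{E}[\max f-f(x_\Lambda)]$. Kometo ($\log$ natural): $j_{\max}=\lfloor\log\tilde\Lambda\rfloor$; level $j$ means fidelity $z_{e^j}$; flags $T_{h,i,j}\in\{0,1\}$ (initially 0) and values $f_{h,i,j}=f_{z_{e^j}}(x_{h,i})$ when $T_{h,i,j}=1$. Opening $\mathcal{P}_{h,i}$ at level $j$: for each child $\mathcal{P}_{h+1,i'}$ and $0\le u\le j$, set $T_{h+1,i',u}=1$ and evaluate $f_{h+1,i',u}$. Steps: open $\mathcal{P}_{0,0}$ with budget $\tilde\Lambda$ (level $j_{\max}$); for $h=1..\lfloor\tilde\Lambda\rfloor$, $m=1..\lfloor\tilde\Lambda/h\rfloor$, with $j=\lfloor\log\frac{\tilde\Lambda}{hm}\rfloor$, open at level $j$ the not-yet-opened depth-$h$ cell with $T_{h,i,j}=1$ and highest $f_{h,i,j}$; for $j=0..j_{\max}$ let $x^c_j$ be the representative of a cell maximizing $f_{h,i,j}$ over $T_{h,i,j}=1$ and evaluate $f_{z_{\tilde\Lambda}}(x^c_j)$; output $x_\Lambda=\arg\max_j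 f_{z_{\tilde\Lambda}}(x^c_j)$. *)

theory Defs
  imports "HOL-Analysis.Analysis" "HOL-Library.Extended_Real"
begin

text \<open>Cells are P h i (depth h, index i < K^h); children of P h i are
  P (h+1) (K*i+l), l < K; xr h i is the representative of P h i.\<close>

definition hier_partition ::
  "nat \<Rightarrow> (nat \<Rightarrow> nat \<Rightarrow> 'x set) \<Rightarrow> (nat \<Rightarrow> nat \<Rightarrow> 'x) \<Rightarrow> bool" where
  "hier_partition K P xr \<longleftrightarrow>
     K \<ge> 2 \<and> P 0 0 = UNIV \<and>
     (\<forall>h i. i < K ^ h \<longrightarrow>
        P h i = (\<Union>l<K. P (Suc h) (K * i + l)) \<and>
        (\<forall>l<K. \<forall>l'<K. l \<noteq> l' \<longrightarrow> P (Suc h) (K * i + l) \<inter> P (Suc h) (K * i + l') = {}) \<and>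
        xr h i \<in> P h i)"

definition in_S ::
  "nat \<Rightarrow> (nat \<Rightarrow> nat \<Rightarrow> 'x set) \<Rightarrow> real \<Rightarrow> real \<Rightarrow> real \<Rightarrow> real \<Rightarrow> ('x \<Rightarrow> real) \<Rightarrow> bool" where
  "in_S K P \<nu> \<rho> d C f \<longleftrightarrow>
     (\<exists>xs. (\<forall>x. f x \<le> f xs) \<and>
        (\<forall>h. \<forall>i<K ^ h. xs \<in> P h i \<longrightarrow> (\<forall>x\<in>P h i. f x \<ge> f xs - \<nu> * \<rho> ^ h)) \<and>
        (\<forall>h. real (card {i. i < K ^ h \<and> (SUP x\<in>P h i. f x) \<ge> f xs - 3 * \<nu> * \<rho> ^ h})
               \<le> C * \<rho> powr (- d * real h)))"

definition kval ::
  "(real \<Rightarrow> 'x \<Rightarrow> real) \<Rightarrow> (real \<Rightarrow> real) \<Rightarrow> (nat \<Rightarrow> nat \<Rightarrow> 'x) \<Rightarrow> nat \<Rightarrow> nat \<Rightarrow> nat \<Rightarrow> real" where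
  "kval fz zc xr h i u = fz (zc (exp (real u))) (xr h i)"

definition open_flags :: "nat \<Rightarrow> nat \<Rightarrow> nat \<Rightarrow> nat \<Rightarrow> (nat \<times> nat \<times> nat) set" where
  "open_flags K h i j = {(Suc h, K * i + l, u) | l u. l < K \<and> u \<le> j}"

text \<open>One iteration of the inner loop at depth h with level j, state (T, Op) where
  T is the set of triples with flag 1 and Op the set of opened cells.
  Ties are broken arbitrarily (nondeterministically); if no candidate exists, nothing happens.\<close>
definition kstep ::
  "nat \<Rightarrow> (real \<Rightarrow> 'x \<Rightarrow> real) \<Rightarrow> (real \<Rightarrow> real) \<Rightarrow> (nat \<Rightarrow> nat \<Rightarrow> 'x) \<Rightarrow> nat \<Rightarrow> nat \<Rightarrow>
   (nat \<times> nat \<times> nat) set \<Rightarrow> (nat \<times> nat) set \<Rightarrow> (nat \<times> nat \<times> nat) set \<Rightarrow> (nat \<times> nat) set \<Rightarrow> bool" where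
  "kstep K fz zc xr h j T Op T' Op' \<longleftrightarrow>
     (let Cand = {i. (h, i, j) \<in> T \<and> (h, i) \<notin> Op} in
       (Cand = {} \<and> T' = T \<and> Op' = Op) \<or>
       (\<exists>i\<in>Cand. (\<forall>i'\<in>Cand. kval fz zc xr h i' j \<le> kval fz zc xr h i j) \<and>
          T' = T \<union> open_flags K h i j \<and> Op' = insert (h, i) Op))"

inductive krun ::
  "nat \<Rightarrow> (real \<Rightarrow> 'x \<Rightarrow> real) \<Rightarrow> (real \<Rightarrow> real) \<Rightarrow> (nat \<Rightarrow> nat \<Rightarrow> 'x) \<Rightarrow> (nat \<times> nat) list \<Rightarrow>
   (nat \<times> nat \<times> nat) set \<Rightarrow> (nat \<times> nat) set \<Rightarrow> (nat \<times> nat \<times> nat) set \<Rightarrow> (nat \<times> nat) set \<Rightarrow> bool"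
  for K fz zc xr where
  krun_Nil: "krun K fz zc xr [] T Op T Op"
| krun_Cons: "kstep K fz zc xr h j T Op T1 Op1 \<Longrightarrow> krun K fz zc xr qs T1 Op1 T2 Op2 \<Longrightarrow>
              krun K fz zc xr ((h, j) # qs) T Op T2 Op2"

definition kschedule :: "nat \<Rightarrow> (nat \<times> nat) list" where
  "kschedule L = concat (map (\<lambda>h. map (\<lambda>m. (h, nat \<lfloor>ln (real L / real (h * m))\<rfloor>)) [1..<L div h + 1]) [1..<L + 1])"

definition lam_tilde :: "nat \<Rightarrow> real \<Rightarrow> nat" where
  "lam_tilde K \<Lambda> = nat \<lfloor>(exp 1 - 1) * \<Lambda> / (2 * real K * exp 1 * (ln \<Lambda> + 1)\<^sup>2)\<rfloor>"

definition jmax :: "nat \<Rightarrow> nat" where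
  "jmax L = nat \<lfloor>ln (real L)\<rfloor>"

text \<open>xout is a possible output of Kometo with budget \<Lambda> (for some tie-breaking).\<close>
definition kometo_output ::
  "nat \<Rightarrow> (real \<Rightarrow> 'x \<Rightarrow> real) \<Rightarrow> (real \<Rightarrow> real) \<Rightarrow> (nat \<Rightarrow> nat \<Rightarrow> 'x) \<Rightarrow> real \<Rightarrow> 'x \<Rightarrow> bool" where
  "kometo_output K fz zc xr \<Lambda> xout \<longleftrightarrow>
     (let L = lam_tilde K \<Lambda>; J = jmax L in
      \<exists>T Op ch ci j0.
        krun K fz zc xr (kschedule L) (open_flags K 0 0 J) {(0, 0)} T Op \<and>
        (\<forall>j\<le>J. (ch j, ci j, j) \<in> T \<and>
           (\<forall>h i. (h, i, j) \<in> T \<longrightarrow> kval fz zc xr h i j \<le> kval fz zc xr (ch j) (ci j) j)) \<and>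
        j0 \<le> J \<and>
        (\<forall>j\<le>J. fz (zc (real L)) (xr (ch j) (ci j)) \<le> fz (zc (real L)) (xr (ch j0) (ci j0))) \<and>
        xout = xr (ch j0) (ci j0))"

end

(*
  Write L for the reduced budget lam_tilde K \<Lambda> and fix the level j of the hypothesis. Its bias is at most \<nu> \<rho>^ht, so at every depth h \<le> ht a cell
  whose level-j value beats that of the cell containing the maximiser is 3 \<nu> \<rho>^h-optimal, and
  there are at most C \<rho>^(-d h) of those. In block h of the schedule more than L/(2 h e^j) - 1 steps
  run at level exactly j, all preceded by steps of level at least j; as long as the optimal cell
  is unopened each of them opens a fresh better cell, so condition (2) forces the optimal cell to
  be opened, which flags its children at level j. By induction along the depths, the optimal cell
  at depth floor ht + 1 is flagged at level j, hence the level-j candidate is 3 \<nu> \<rho>^ht-optimal,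
  and the final comparison at fidelity z_L costs at most twice the bias \<Psi>(L). If j exceeds
  j_max, condition (2) forces ht < 1/4 and the bound \<nu> from the root cell suffices.
*)
theory Submission
  imports Defs
begin

lemma strict_mono_approx_le:
  fixes f u :: "'a \<Rightarrow> real" and g :: "real \<Rightarrow> real"
  assumes "strict_mono g" "\<forall>x. \<bar>f x - g (u x)\<bar> \<le> E" "u x \<le> u y"
  shows "f x - 2 * E \<le> f y"
proof -
  have "g (u x) \<le> g (u y)" using strict_mono_leD[OF assms(1,3)] .
  then show ?thesis using assms(2) by (smt (verit))
qed

lemma strict_mono_approx_le_ereal:
  fixes f u :: "'a \<Rightarrow> real" and g :: "real \<Rightarrow> real"
  assumes "strict_mono g" "\<forall>x. ereal \<bar>f x - g (u x)\<bar> \<le> e" "u x \<le> u y"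
  shows "ereal (c - f y) \<le> ereal (c - f x) + 2 * e"
proof (cases e)
  case (real E)
  with assms have "f x - 2 * E \<le> f y" by (intro strict_mono_approx_le) auto
  with real show ?thesis by simp
next
  case MInf
  with assms(2) show ?thesis by auto
qed simp

lemma powr_power_antimono:
  fixes \<rho> x :: real
  assumes "0 < \<rho>" "\<rho> \<le> 1"
  shows "real k \<le> x \<Longrightarrow> \<rho> powr x \<le> \<rho> ^ k" and "x \<le> real k \<Longrightarrow> \<rho> ^ k \<le> \<rho> powr x"
  using assms powr_mono'[of "real k" x \<rho>] powr_mono'[of x "real k" \<rho>] by (simp_all add: powr_realpow)

lemma one_le_C_rho_powr:
  fixes \<rho> d C x :: real
  assumes "0 < \<rho>" "\<rho> < 1" "d \<ge> 0" "C > 1" "x \<ge> 0"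
  shows "1 \<le> C * \<rho> powr (- d * x)"
proof -
  have "1 \<le> \<rho> powr (- d * x)"
    using powr_mono'[of "- d * x" 0 \<rho>] assms by (simp add: mult_nonneg_nonneg)
  with assms show ?thesis by (smt (verit) mult_less_cancel_left2)
qed

lemma child_index_less: "i < K ^ h \<Longrightarrow> l < (K::nat) \<Longrightarrow> K * i + l < K ^ Suc h"
proof -
  assume "i < K ^ h" "l < K"
  then have "K * i + l < K * i + K" by simp
  also have "\<dots> = K * (i + 1)" by simp
  also have "\<dots> \<le> K * K ^ h" using \<open>i < K ^ h\<close> by (intro mult_le_mono2) simp
  finally show ?thesis by simp
qed

lemma hier_partition_child:
  assumes "hier_partition K P xr" "i < K ^ h" "x \<in> P h i"
  shows "\<exists>l<K. x \<in> P (Suc h) (K * i + l)"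
  using assms unfolding hier_partition_def by blast

primrec cell_of :: "nat \<Rightarrow> (nat \<Rightarrow> nat \<Rightarrow> 'x set) \<Rightarrow> 'x \<Rightarrow> nat \<Rightarrow> nat" where
  "cell_of K P x 0 = 0"
| "cell_of K P x (Suc h) = K * cell_of K P x h + (SOME l. l < K \<and> x \<in> P (Suc h) (K * cell_of K P x h + l))"

lemma cell_of_Suc:
  assumes part: "hier_partition K P xr"
    and "cell_of K P x h < K ^ h" "x \<in> P h (cell_of K P x h)"
  obtains l where "l < K" "cell_of K P x (Suc h) = K * cell_of K P x h + l"
    "x \<in> P (Suc h) (cell_of K P x (Suc h))"
proof -
  have "\<exists>l<K. x \<in> P (Suc h) (K * cell_of K P x h + l)"
    using hier_partition_child[OF assms] .
  from someI_ex[OF this] show thesis by (intro that) auto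
qed

lemma cell_of_mem:
  assumes part: "hier_partition K P xr"
  shows "cell_of K P x h < K ^ h \<and> x \<in> P h (cell_of K P x h)"
proof (induction h)
  case 0
  then show ?case using part unfolding hier_partition_def by simp
next
  case (Suc h)
  then obtain l where "l < K" "cell_of K P x (Suc h) = K * cell_of K P x h + l"
    "x \<in> P (Suc h) (cell_of K P x (Suc h))"
    using cell_of_Suc[OF part] by blast
  with Suc show ?case using child_index_less by presburger
qed

lemma in_S_maximizer:
  assumes "in_S K P \<nu> \<rho> d C f"
  obtains xs where "(SUP x. f x) = f xs" "\<forall>x. f x \<le> f xs"
    "\<forall>h. \<forall>i<K ^ h. xs \<in> P h i \<longrightarrow> (\<forall>x\<in>P h i. f xs - \<nu> * \<rho> ^ h \<le> f x)"
    "\<forall>h. real (card {i. i < K ^ h \<and> f xs - 3 * \<nu> * \<rho> ^ h \<le> (SUP x\<in>P h i. f x)}) \<le> C * \<rho> powr (- d * real h)"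
proof -
  from assms obtain xs where xs: "\<forall>x. f x \<le> f xs"
    "\<forall>h. \<forall>i<K ^ h. xs \<in> P h i \<longrightarrow> (\<forall>x\<in>P h i. f xs - \<nu> * \<rho> ^ h \<le> f x)"
    "\<forall>h. real (card {i. i < K ^ h \<and> f xs - 3 * \<nu> * \<rho> ^ h \<le> (SUP x\<in>P h i. f x)}) \<le> C * \<rho> powr (- d * real h)"
    unfolding in_S_def by blast
  moreover from xs(1) have "(SUP x. f x) = f xs" by (intro cSup_eq_maximum) auto
  ultimately show thesis using that by blast
qed

lemma in_S_regret_le:
  assumes "hier_partition K P xr" "in_S K P \<nu> \<rho> d C f"
  shows "(SUP x. f x) - f x \<le> \<nu>"
proof -
  obtain xs where sup: "(SUP x. f x) = f xs"
    and loc: "\<forall>h. \<forall>i<K ^ h. xs \<in> P h i \<longrightarrow> (\<forall>x\<in>P h i. f xs - \<nu> * \<rho> ^ h \<le> f x)"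
    by (rule in_S_maximizer[OF assms(2)]) blast
  have "P 0 0 = UNIV" using assms(1) unfolding hier_partition_def by blast
  with loc[rule_format, of 0 0 x] sup show ?thesis by simp
qed

definition flags_bounded :: "nat \<Rightarrow> (nat \<times> nat \<times> nat) set \<Rightarrow> bool" where
  "flags_bounded K T \<longleftrightarrow> (\<forall>h i u. (h, i, u) \<in> T \<longrightarrow> i < K ^ h)"

lemma kstep_cases:
  assumes "kstep K fz zc xr h j T Op T' Op'"
  obtains "T' = T" "Op' = Op"
  | i where "(h, i, j) \<in> T" "(h, i) \<notin> Op"
      "\<And>i'. (h, i', j) \<in> T \<Longrightarrow> (h, i') \<notin> Op \<Longrightarrow> kval fz zc xr h i' j \<le> kval fz zc xr h i j"
      "T' = T \<union> open_flags K h i j" "Op' = insert (h, i) Op"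
  using assms unfolding kstep_def Let_def by auto

lemma kstep_candidate:
  assumes "kstep K fz zc xr h j T Op T' Op'" "(h, i0, j) \<in> T" "(h, i0) \<notin> Op"
  obtains i where "(h, i, j) \<in> T" "(h, i) \<notin> Op" "kval fz zc xr h i0 j \<le> kval fz zc xr h i j"
    "T' = T \<union> open_flags K h i j" "Op' = insert (h, i) Op"
  using assms unfolding kstep_def Let_def by auto

lemma kstep_mono:
  assumes "kstep K fz zc xr h j T Op T' Op'"
  shows "T \<subseteq> T'" "Op \<subseteq> Op'"
  using assms by (cases rule: kstep_cases; auto)+

lemma kstep_flags_bounded:
  assumes "kstep K fz zc xr h j T Op T' Op'" "flags_bounded K T"
  shows "flags_bounded K T'"
  using assms(1)
proof (cases rule: kstep_cases)
  case (2 i)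
  then have "i < K ^ h" using assms(2) unfolding flags_bounded_def by blast
  then have "\<forall>l<K. K * i + l < K ^ Suc h" using child_index_less by blast
  then show ?thesis using assms(2) 2(4) unfolding flags_bounded_def open_flags_def by auto
qed (use assms(2) in simp)

lemma krun_mono: "krun K fz zc xr qs T Op T' Op' \<Longrightarrow> T \<subseteq> T' \<and> Op \<subseteq> Op'"
proof (induction rule: krun.induct)
  case (krun_Cons h j T Op T1 Op1 qs T2 Op2)
  with kstep_mono[OF krun_Cons(1)] show ?case by blast
qed simp

lemma krun_flags_bounded:
  "krun K fz zc xr qs T Op T' Op' \<Longrightarrow> flags_bounded K T \<Longrightarrow> flags_bounded K T'"
  by (induction rule: krun.induct) (auto dest: kstep_flags_bounded)

lemma krun_opened_depths:
  "krun K fz zc xr qs T Op T' Op' \<Longrightarrow> Op' \<subseteq> Op \<union> {p. fst p \<in> fst ` set qs}"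
proof (induction rule: krun.induct)
  case (krun_Cons h j T Op T1 Op1 qs T2 Op2)
  from krun_Cons(1) have "Op1 \<subseteq> Op \<union> {p. fst p = h}" by (cases rule: kstep_cases) auto
  with krun_Cons.IH show ?case by auto
qed simp

lemma krun_append_split:
  "krun K fz zc xr (qs @ rs) T Op T2 Op2 \<Longrightarrow>
     \<exists>T1 Op1. krun K fz zc xr qs T Op T1 Op1 \<and> krun K fz zc xr rs T1 Op1 T2 Op2"
proof (induction qs arbitrary: T Op)
  case Nil
  then show ?case by (auto intro: krun.intros)
next
  case (Cons q qs)
  from Cons.prems obtain h j T1 Op1 where q: "q = (h, j)" and step: "kstep K fz zc xr h j T Op T1 Op1"
    and rest: "krun K fz zc xr (qs @ rs) T1 Op1 T2 Op2"
    by (cases rule: krun.cases) auto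
  from Cons.IH[OF rest] obtain T3 Op3
    where "krun K fz zc xr qs T1 Op1 T3 Op3" "krun K fz zc xr rs T3 Op3 T2 Op2" by blast
  with q step show ?case by (blast intro: krun.krun_Cons)
qed

lemma krun_appendE:
  assumes "krun K fz zc xr (qs @ rs) T Op T2 Op2"
  obtains T1 Op1 where "krun K fz zc xr qs T Op T1 Op1" "krun K fz zc xr rs T1 Op1 T2 Op2"
  using krun_append_split[OF assms] by blast

lemma krun_opening_flags_children:
  assumes "krun K fz zc xr qs T Op T' Op'"
    and "\<forall>(h', j')\<in>set qs. h' = h \<longrightarrow> j \<le> j'"
    and "(h, i) \<in> Op'" "(h, i) \<notin> Op" "l < K"
  shows "(Suc h, K * i + l, j) \<in> T'"
  using assms
proof (induction rule: krun.induct)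
  case (krun_Cons h' j' T Op T1 Op1 qs T2 Op2)
  show ?case
  proof (cases "(h, i) \<in> Op1")
    case True
    from krun_Cons(1) show ?thesis
    proof (cases rule: kstep_cases)
      case (2 i')
      with True krun_Cons.prems have "h' = h" "i' = i" "j \<le> j'" by auto
      with 2 krun_Cons.prems(4) have "(Suc h, K * i + l, j) \<in> T1"
        unfolding open_flags_def by auto
      then show ?thesis using krun_mono[OF krun_Cons(2)] by blast
    qed (use True krun_Cons.prems in simp)
  next
    case False
    with krun_Cons.IH krun_Cons.prems show ?thesis by simp
  qed
qed simp

definition better_cells ::
  "nat \<Rightarrow> (real \<Rightarrow> 'x \<Rightarrow> real) \<Rightarrow> (real \<Rightarrow> real) \<Rightarrow> (nat \<Rightarrow> nat \<Rightarrow> 'x) \<Rightarrow> nat \<Rightarrow> nat \<Rightarrow> nat \<Rightarrow> nat set"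
  where "better_cells K fz zc xr h j i0 = {i. i < K ^ h \<and> kval fz zc xr h i0 j \<le> kval fz zc xr h i j}"

lemma finite_better_cells: "finite (better_cells K fz zc xr h j i0)"
  unfolding better_cells_def by (rule finite_subset[of _ "{..<K ^ h}"]) auto

lemma krun_count_openings:
  assumes "krun K fz zc xr qs T Op T' Op'"
    and "flags_bounded K T" "(h, i0, j) \<in> T" "(h, i0) \<notin> Op'"
  shows "length (filter ((=) (h, j)) qs) + card {i \<in> better_cells K fz zc xr h j i0. (h, i) \<in> Op}
           \<le> card {i \<in> better_cells K fz zc xr h j i0. (h, i) \<in> Op'}"
  using assms
proof (induction rule: krun.induct)
  case (krun_Cons h' j' T Op T1 Op1 qs T2 Op2)
  let ?B = "better_cells K fz zc xr h j i0"
  have "(h, i0, j) \<in> T1" "(h, i0) \<notin> Op1"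
    using kstep_mono[OF krun_Cons(1)] krun_mono[OF krun_Cons(2)] krun_Cons.prems by blast+
  then have IH: "length (filter ((=) (h, j)) qs) + card {i \<in> ?B. (h, i) \<in> Op1} \<le> card {i \<in> ?B. (h, i) \<in> Op2}"
    using krun_Cons.IH krun_Cons.prems kstep_flags_bounded[OF krun_Cons(1)] by blast
  have "card {i \<in> ?B. (h, i) \<in> Op} + (if (h', j') = (h, j) then 1 else 0) \<le> card {i \<in> ?B. (h, i) \<in> Op1}"
  proof (cases "(h', j') = (h, j)")
    case True
    have "(h, i0) \<notin> Op" using \<open>(h, i0) \<notin> Op1\<close> kstep_mono[OF krun_Cons(1)] by blast
    with krun_Cons(1) True krun_Cons.prems(2) obtain i where i: "(h, i, j) \<in> T" "(h, i) \<notin> Op"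
      "kval fz zc xr h i0 j \<le> kval fz zc xr h i j" "Op1 = insert (h, i) Op"
      by (auto elim: kstep_candidate)
    with krun_Cons.prems(1) have "i \<in> ?B" unfolding flags_bounded_def better_cells_def by blast
    with i have "{i \<in> ?B. (h, i) \<in> Op1} = insert i {i \<in> ?B. (h, i) \<in> Op}" by auto
    moreover have "card (insert i {i \<in> ?B. (h, i) \<in> Op}) = Suc (card {i \<in> ?B. (h, i) \<in> Op})"
      using i(2) by (intro card_insert_disjoint) (auto simp: finite_better_cells)
    ultimately show ?thesis using True by simp
  next
    case False
    from kstep_mono(2)[OF krun_Cons(1)] have "card {i \<in> ?B. (h, i) \<in> Op} \<le> card {i \<in> ?B. (h, i) \<in> Op1}"
      by (intro card_mono) (auto simp: finite_better_cells)
    with False show ?thesis by auto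
  qed
  with IH show ?case by auto
qed simp

definition klevel :: "nat \<Rightarrow> nat \<Rightarrow> nat \<Rightarrow> nat" where
  "klevel L h m = nat \<lfloor>ln (real L / real (h * m))\<rfloor>"

definition kblock :: "nat \<Rightarrow> nat \<Rightarrow> (nat \<times> nat) list" where
  "kblock L h = map (\<lambda>m. (h, klevel L h m)) [1..<L div h + 1]"

lemma kschedule_eq_blocks: "kschedule L = concat (map (kblock L) [1..<L + 1])"
  unfolding kschedule_def kblock_def klevel_def ..

lemma klevel_ge:
  assumes "1 \<le> h" "1 \<le> m" "real m * real h * exp (real j) \<le> real L"
  shows "j \<le> klevel L h m"
proof -
  have "exp (real j) \<le> real L / real (h * m)"
    using assms by (simp add: le_divide_eq mult_ac)
  then have "real j \<le> ln (real L / real (h * m))"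
    by (metis exp_gt_zero less_le_trans ln_exp ln_le_cancel_iff)
  then show ?thesis unfolding klevel_def by linarith
qed

lemma klevel_le:
  assumes "1 \<le> h" "1 \<le> m" "0 < L" "real L < real m * real h * exp (real j + 1)"
  shows "klevel L h m \<le> j"
proof -
  have "real L / real (h * m) < exp (real j + 1)"
    using assms by (simp add: divide_less_eq mult_ac)
  moreover have "0 < real L / real (h * m)" using assms by simp
  ultimately have "ln (real L / real (h * m)) < real j + 1"
    by (metis ln_exp ln_less_cancel_iff exp_gt_zero)
  then show ?thesis unfolding klevel_def by linarith
qed

text \<open>Steps m \<le> a = L / (h e^j) have level at least j, and those with a / e < m \<le> a have level
  exactly j; since 1 - 1/e \<ge> 1/2 there are more than a / 2 - 1 of the latter.\<close>
lemma kblock_prefix_levels: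
  assumes "1 \<le> h"
  obtains M where "M \<le> L div h" "\<forall>m\<in>{1..M}. j \<le> klevel L h m"
    "real L / (2 * real h * exp (real j)) - 1 < real (length (filter (\<lambda>m. klevel L h m = j) [1..<M + 1]))"
proof -
  define a where "a = real L / (real h * exp (real j))"
  define M where "M = nat \<lfloor>a\<rfloor>"
  define M' where "M' = nat \<lfloor>a / exp 1\<rfloor>"
  have a_nonneg: "0 \<le> a" unfolding a_def by simp
  have e2: "2 \<le> exp (1::real)" using exp_ge_add_one_self[of 1] by simp
  have M: "real M \<le> a" "a - 1 < real M" unfolding M_def using a_nonneg by linarith+
  have M': "real M' \<le> a / exp 1" unfolding M'_def using a_nonneg by (simp add: of_nat_floor)
  have "a / exp 1 \<le> a" using a_nonneg by (simp add: divide_le_eq mult_le_cancel_left1)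
  then have M'_le: "M' \<le> M" unfolding M_def M'_def by (intro nat_mono floor_mono)
  have level_ge: "j \<le> klevel L h m" if "m \<in> {1..M}" for m
  proof (rule klevel_ge)
    have "real m \<le> a" using that M(1) by simp
    then show "real m * real h * exp (real j) \<le> real L"
      unfolding a_def using assms by (simp add: le_divide_eq mult_ac)
  qed (use assms that in auto)
  have level_eq: "klevel L h m = j" if "M' < m" "m \<le> M" for m
  proof (rule antisym[OF klevel_le level_ge])
    have "a / exp 1 < real m" using that(1) unfolding M'_def by linarith
    then show "real L < real m * real h * exp (real j + 1)"
      unfolding a_def using assms by (simp add: divide_less_eq exp_add mult_ac)
    have "0 < a" using that M(1) by linarith
    then show "0 < L" unfolding a_def by (simp add: zero_less_divide_iff)
  qed (use assms that in auto)
  have "M - M' = length (filter (\<lambda>m. klevel L h m = j) [M' + 1..<M + 1])"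
    using level_eq M'_le by (simp add: filter_True Suc_diff_Suc)
  also have "\<dots> \<le> length (filter (\<lambda>m. klevel L h m = j) [1..<M + 1])"
    using upt_add_eq_append[of 1 "M' + 1" "M - M'"] M'_le by simp
  finally have count: "M - M' \<le> length (filter (\<lambda>m. klevel L h m = j) [1..<M + 1])" .
  have "a / exp 1 \<le> a / 2" using e2 a_nonneg by (intro divide_left_mono) auto
  then have "a / 2 - 1 < real (M - M')" using M M' M'_le by (simp only: of_nat_diff)
  moreover have "real L / (2 * real h * exp (real j)) = a / 2" unfolding a_def by simp
  moreover have "real M * real h * exp (real j) \<le> real L"
    using M(1) assms unfolding a_def by (simp add: le_divide_eq mult_ac)
  then have "real M * real h \<le> real L"
    by (smt (verit) mult_le_cancel_left1 one_le_exp_iff of_nat_0_le_iff zero_le_mult_iff)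
  then have "M \<le> L div h"
    using assms by (simp add: less_eq_div_iff_mult_less_eq flip: of_nat_mult)
  ultimately show ?thesis using that level_ge count by fastforce
qed

text \<open>Each level-j step of the block opens a new cell at least as good as i0 as long as i0
  itself stays unopened; there are too many such steps for that to last.\<close>
lemma krun_kblock_flags_child:
  assumes run: "krun K fz zc xr (kblock L h) T Op T' Op'"
    and h: "1 \<le> h" and bounded: "flags_bounded K T"
    and flag: "(h, i0, j) \<in> T" and unopened: "(h, i0) \<notin> Op" and l: "l < K"
    and few: "4 * real (card (better_cells K fz zc xr h j i0)) \<le> real L / (real h * exp (real j))"
  shows "(Suc h, K * i0 + l, j) \<in> T'"
proof -
  let ?B = "better_cells K fz zc xr h j i0"
  let ?F = "\<lambda>m. (h, klevel L h m)"
  obtain M where M: "M \<le> L div h" "\<forall>m\<in>{1..M}. j \<le> klevel L h m"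
    and many: "real L / (2 * real h * exp (real j)) - 1
                 < real (length (filter (\<lambda>m. klevel L h m = j) [1..<M + 1]))"
    using kblock_prefix_levels[OF h] by blast
  define n where "n = length (filter (\<lambda>m. klevel L h m = j) [1..<M + 1])"
  define a where "a = real L / (real h * exp (real j))"
  have "a / 2 - 1 < real n" "4 * real (card ?B) \<le> a"
    using many few unfolding n_def a_def by (simp_all add: mult.assoc)
  have "kblock L h = map ?F [1..<M + 1] @ map ?F [M + 1..<L div h + 1]"
    unfolding kblock_def using upt_add_eq_append[of 1 "M + 1" "L div h - M"] M(1) by simp
  with run obtain T2 Op2 where run1: "krun K fz zc xr (map ?F [1..<M + 1]) T Op T2 Op2"
    and run2: "krun K fz zc xr (map ?F [M + 1..<L div h + 1]) T2 Op2 T' Op'"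
    by (auto elim: krun_appendE)
  have "(Suc h, K * i0 + l, j) \<in> T2"
  proof (rule ccontr)
    assume "(Suc h, K * i0 + l, j) \<notin> T2"
    moreover have "\<forall>(h', j')\<in>set (map ?F [1..<M + 1]). h' = h \<longrightarrow> j \<le> j'" using M(2) by auto
    ultimately have "(h, i0) \<notin> Op2"
      using krun_opening_flags_children[OF run1 _ _ unopened l] by blast
    have "i0 \<in> ?B" using bounded flag unfolding flags_bounded_def better_cells_def by blast
    have "length (filter ((=) (h, j)) (map ?F ms)) = length (filter (\<lambda>m. klevel L h m = j) ms)" for ms
      by (induction ms) auto
    then have "n \<le> card {i \<in> ?B. (h, i) \<in> Op2}"
      using krun_count_openings[OF run1 bounded flag \<open>(h, i0) \<notin> Op2\<close>] unfolding n_def by simp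
    also have "\<dots> \<le> card (?B - {i0})"
      using \<open>(h, i0) \<notin> Op2\<close> by (intro card_mono) (auto simp: finite_better_cells)
    also have "\<dots> < card ?B"
      using \<open>i0 \<in> ?B\<close> by (intro psubset_card_mono) (auto simp: finite_better_cells)
    finally have "real n + 1 \<le> real (card ?B)" by linarith
    with \<open>a / 2 - 1 < real n\<close> \<open>4 * real (card ?B) \<le> a\<close> show False by linarith
  qed
  then show ?thesis using krun_mono[OF run2] by blast
qed

lemma krun_blocks_flag_path:
  assumes "n \<le> m" and bounded: "flags_bounded K T" and unopened: "\<forall>p\<in>Op. fst p < n"
    and flag: "(n, cell n, j) \<in> T"
    and depth: "\<And>k. \<forall>q\<in>set (blk k). fst q = k"
    and advance: "\<And>k T0 Op0 T1 Op1. n \<le> k \<Longrightarrow> k < m \<Longrightarrow> krun K fz zc xr (blk k) T0 Op0 T1 Op1 \<Longrightarrow>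
                 flags_bounded K T0 \<Longrightarrow> (k, cell k, j) \<in> T0 \<Longrightarrow> (k, cell k) \<notin> Op0 \<Longrightarrow>
                 (Suc k, cell (Suc k), j) \<in> T1"
  shows "krun K fz zc xr (concat (map blk [n..<m])) T Op T' Op' \<Longrightarrow> (m, cell m, j) \<in> T'"
  using \<open>n \<le> m\<close>
proof (induction m arbitrary: T' Op' rule: dec_induct)
  case base
  then show ?case using flag by (auto elim: krun.cases)
next
  case (step k)
  from step.prems \<open>n \<le> k\<close> obtain T1 Op1
    where run1: "krun K fz zc xr (concat (map blk [n..<k])) T Op T1 Op1"
      and run2: "krun K fz zc xr (blk k) T1 Op1 T' Op'"
    by (auto elim: krun_appendE)
  have "(k, cell k) \<notin> Op1"
    using krun_opened_depths[OF run1] unopened depth \<open>n \<le> k\<close> by fastforce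
  with step.hyps step.IH[OF run1] show ?case
    by (intro step.prems(1) advance[OF _ _ run2] krun_flags_bounded[OF run1 bounded]) auto
qed

lemma open_flags_root_bounded: "flags_bounded K (open_flags K 0 0 J)"
  unfolding flags_bounded_def open_flags_def by auto

lemma kometo_flags_cell_path:
  assumes run: "krun K fz zc xr (kschedule L) (open_flags K 0 0 J) {(0, 0)} T Op"
    and "j \<le> J" "H \<le> L"
    and cell0: "cell 0 = 0" and cell_Suc: "\<And>k. \<exists>l<K. cell (Suc k) = K * cell k + l"
    and few: "\<And>k. 1 \<le> k \<Longrightarrow> k \<le> H \<Longrightarrow>
      4 * real (card (better_cells K fz zc xr k j (cell k))) \<le> real L / (real k * exp (real j))"
  shows "(Suc H, cell (Suc H), j) \<in> T"
proof -
  have "kschedule L = concat (map (kblock L) [1..<Suc H]) @ concat (map (kblock L) [Suc H..<L + 1])"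
    unfolding kschedule_eq_blocks using upt_add_eq_append[of 1 "Suc H" "L - H"] \<open>H \<le> L\<close>
    by (simp flip: concat_append map_append)
  with run obtain T1 Op1
    where run1: "krun K fz zc xr (concat (map (kblock L) [1..<Suc H])) (open_flags K 0 0 J) {(0, 0)} T1 Op1"
      and run2: "krun K fz zc xr (concat (map (kblock L) [Suc H..<L + 1])) T1 Op1 T Op"
    by (auto elim: krun_appendE)
  have flag1: "(1, cell 1, j) \<in> open_flags K 0 0 J"
    using cell_Suc[of 0] cell0 \<open>j \<le> J\<close> unfolding open_flags_def by auto
  have "(Suc H, cell (Suc H), j) \<in> T1"
  proof (rule krun_blocks_flag_path[where cell = cell, OF _ open_flags_root_bounded _ flag1 _ _ run1])
    fix k T0 Op0 T2 Op2
    assume k: "1 \<le> k" "k < Suc H" and run_k: "krun K fz zc xr (kblock L k) T0 Op0 T2 Op2"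
      and "flags_bounded K T0" "(k, cell k, j) \<in> T0" "(k, cell k) \<notin> Op0"
    moreover obtain l where "l < K" "cell (Suc k) = K * cell k + l" using cell_Suc by blast
    moreover have "4 * real (card (better_cells K fz zc xr k j (cell k))) \<le> real L / (real k * exp (real j))"
      using few k by simp
    ultimately show "(Suc k, cell (Suc k), j) \<in> T2"
      using krun_kblock_flags_child[OF run_k] by simp
  qed (auto simp: kblock_def)
  then show ?thesis using krun_mono[OF run2] by blast
qed

lemma better_cells_near_optimal:
  fixes f :: "'x \<Rightarrow> real"
  assumes part: "hier_partition K P xr" and bdd: "\<forall>x. f x \<le> fmax"
    and i0: "i0 < K ^ h" "\<forall>x\<in>P h i0. fmax - \<epsilon> \<le> f x"
    and approx: "strict_mono g" "\<forall>x. \<bar>f x - g (fz (zc (exp (real j))) x)\<bar> \<le> E" and "E \<le> \<epsilon>"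
  shows "better_cells K fz zc xr h j i0 \<subseteq> {i. i < K ^ h \<and> fmax - 3 * \<epsilon> \<le> (SUP x\<in>P h i. f x)}"
proof
  fix i assume "i \<in> better_cells K fz zc xr h j i0"
  then have i: "i < K ^ h" "fz (zc (exp (real j))) (xr h i0) \<le> fz (zc (exp (real j))) (xr h i)"
    unfolding better_cells_def kval_def by auto
  have xr: "xr h i' \<in> P h i'" if "i' < K ^ h" for i'
    using part that unfolding hier_partition_def by blast
  have "fmax - \<epsilon> - 2 * E \<le> f (xr h i)"
    using strict_mono_approx_le[OF approx i(2)] i0 xr[OF i0(1)] by fastforce
  also have "f (xr h i) \<le> (SUP x\<in>P h i. f x)"
    using xr[OF i(1)] bdd by (intro cSUP_upper bdd_aboveI2) auto
  finally show "i \<in> {i. i < K ^ h \<and> fmax - 3 * \<epsilon> \<le> (SUP x\<in>P h i. f x)}"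
    using i(1) \<open>E \<le> \<epsilon>\<close> by simp
qed

lemma fidelity_approx_Psi:
  assumes bias: "\<forall>z\<in>{0..1}. \<zeta> z \<ge> 0 \<and> strict_mono (g z) \<and> (\<forall>x. ereal \<bar>f x - g z (fz z x)\<bar> \<le> \<zeta> z)"
    and fid: "\<forall>c\<ge>1. zc c \<in> {0..1} \<and> lam (zc c) \<le> c"
    and Phi: "\<forall>c\<ge>1. \<Phi> c = \<zeta> (zc c)" and Phi_Psi: "\<forall>c\<ge>1. \<Phi> c \<le> \<Psi> c"
    and "1 \<le> c"
  shows "strict_mono (g (zc c))" "\<forall>x. ereal \<bar>f x - g (zc c) (fz (zc c) x)\<bar> \<le> \<Psi> c"
  using assms by (metis order.trans)+

lemma kometo_budget_at_depth:
  fixes \<rho> d C ht :: real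
  assumes "0 < \<rho>" "\<rho> < 1" "d \<ge> 0" "C > 0" "1 \<le> k" "real k \<le> ht"
    and budget: "C * \<rho> powr (- d * ht) \<le> real L / (4 * ht * exp (real j))"
  shows "4 * (C * \<rho> powr (- d * real k)) \<le> real L / (real k * exp (real j))"
proof -
  have "C * \<rho> powr (- d * real k) \<le> C * \<rho> powr (- d * ht)"
    using assms powr_mono'[of "- d * ht" "- d * real k" \<rho>] mult_left_mono[of "real k" ht d]
    by (intro mult_left_mono) auto
  also have "\<dots> \<le> real L / (4 * real k * exp (real j))"
    using budget divide_left_mono[of "4 * real k * exp (real j)" "4 * ht * exp (real j)" "real L"] assms
    by simp
  finally show ?thesis using assms by (simp add: le_divide_eq mult_ac)
qed

lemma kometo_budget_ge:
  fixes \<rho> d C ht :: real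
  assumes "0 < \<rho>" "\<rho> < 1" "d \<ge> 0" "C > 1" "ht > 0"
    and budget: "C * \<rho> powr (- d * ht) \<le> real L / (4 * ht * exp (real j))"
  shows "4 * ht * exp (real j) \<le> real L" and "1 \<le> L"
proof -
  have "1 \<le> C * \<rho> powr (- d * ht)" using one_le_C_rho_powr assms by simp
  then have "4 * ht * exp (real j) \<le> C * \<rho> powr (- d * ht) * (4 * ht * exp (real j))"
    using \<open>ht > 0\<close> by simp
  also have "\<dots> \<le> real L" using budget \<open>ht > 0\<close> by (simp add: le_divide_eq)
  finally show "4 * ht * exp (real j) \<le> real L" .
  moreover have "0 < 4 * ht * exp (real j)" using \<open>ht > 0\<close> by simp
  ultimately show "1 \<le> L" by linarith
qed

lemma kometo_level_candidate_near_optimal: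
  assumes part: "hier_partition K P xr"
    and params: "0 \<le> \<nu>" "0 < \<rho>" "\<rho> < 1" "d \<ge> 0" "C > 1"
    and fS: "in_S K P \<nu> \<rho> d C f"
    and approx: "strict_mono g" "\<forall>x. \<bar>f x - g (fz (zc (exp (real j))) x)\<bar> \<le> \<nu> * \<rho> powr ht"
    and ht: "ht > 0"
    and budget: "C * \<rho> powr (- d * ht) \<le> real L / (4 * ht * exp (real j))"
    and run: "krun K fz zc xr (kschedule L) (open_flags K 0 0 J) {(0, 0)} T Op" and "j \<le> J"
    and best: "(h, i, j) \<in> T" "\<And>h' i'. (h', i', j) \<in> T \<Longrightarrow> kval fz zc xr h' i' j \<le> kval fz zc xr h i j"
  shows "(SUP x. f x) - f (xr h i) \<le> 3 * \<nu> * \<rho> powr ht"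
proof -
  obtain xs where sup: "(SUP x. f x) = f xs" and bdd: "\<forall>x. f x \<le> f xs"
    and loc: "\<forall>k. \<forall>i<K ^ k. xs \<in> P k i \<longrightarrow> (\<forall>x\<in>P k i. f xs - \<nu> * \<rho> ^ k \<le> f x)"
    and count: "\<forall>k. real (card {i. i < K ^ k \<and> f xs - 3 * \<nu> * \<rho> ^ k \<le> (SUP x\<in>P k i. f x)})
                     \<le> C * \<rho> powr (- d * real k)"
    by (rule in_S_maximizer[OF fS])
  define c where "c = cell_of K P xs"
  define H where "H = nat \<lfloor>ht\<rfloor>"
  have c: "c k < K ^ k" "\<forall>x\<in>P k (c k). f xs - \<nu> * \<rho> ^ k \<le> f x" for k
    using cell_of_mem[OF part] loc unfolding c_def by blast+
  have few: "4 * real (card (better_cells K fz zc xr k j (c k))) \<le> real L / (real k * exp (real j))"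
    if "1 \<le> k" "k \<le> H" for k
  proof -
    have "real k \<le> ht" using that unfolding H_def by linarith
    then have "\<rho> powr ht \<le> \<rho> ^ k" using params by (intro powr_power_antimono(1)) auto
    then have "\<nu> * \<rho> powr ht \<le> \<nu> * \<rho> ^ k" using params by (intro mult_left_mono)
    then have "better_cells K fz zc xr k j (c k)
        \<subseteq> {i. i < K ^ k \<and> f xs - 3 * \<nu> * \<rho> ^ k \<le> (SUP x\<in>P k i. f x)}"
      using better_cells_near_optimal[where fz = fz and zc = zc and j = j, OF part bdd c approx]
      by (simp add: mult.assoc)
    then have "real (card (better_cells K fz zc xr k j (c k)))
        \<le> real (card {i. i < K ^ k \<and> f xs - 3 * \<nu> * \<rho> ^ k \<le> (SUP x\<in>P k i. f x)})"
      by (intro of_nat_mono card_mono) auto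
    also have "\<dots> \<le> C * \<rho> powr (- d * real k)" using count by blast
    finally have "real (card (better_cells K fz zc xr k j (c k))) \<le> C * \<rho> powr (- d * real k)" .
    then show ?thesis using kometo_budget_at_depth[OF params(2-4) _ that(1) \<open>real k \<le> ht\<close> budget] params
      by simp
  qed
  have "1 \<le> 4 * exp (real j)" using one_le_exp_iff[of "real j"] by linarith
  then have "ht \<le> 4 * ht * exp (real j)" using ht by (simp add: mult_le_cancel_left1)
  then have "ht \<le> real L" using kometo_budget_ge(1)[OF params(2-5) ht budget] by linarith
  then have "real H \<le> real L" using ht unfolding H_def by linarith
  then have "H \<le> L" by simp
  have "(Suc H, c (Suc H), j) \<in> T"
    using kometo_flags_cell_path[OF run \<open>j \<le> J\<close> \<open>H \<le> L\<close> _ _ few] cell_of_Suc[OF part] cell_of_mem[OF part]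
    unfolding c_def by (metis cell_of.simps(1))
  then have "f (xr (Suc H) (c (Suc H))) - 2 * (\<nu> * \<rho> powr ht) \<le> f (xr h i)"
    using best(2) approx unfolding kval_def by (intro strict_mono_approx_le[of g]) auto
  moreover have "xr (Suc H) (c (Suc H)) \<in> P (Suc H) (c (Suc H))"
    using part c(1) unfolding hier_partition_def by blast
  then have "f xs - \<nu> * \<rho> ^ Suc H \<le> f (xr (Suc H) (c (Suc H)))" using c(2) by blast
  moreover have "ht \<le> real (Suc H)" using ht unfolding H_def by linarith
  then have "\<rho> ^ Suc H \<le> \<rho> powr ht" using params by (intro powr_power_antimono(2)) auto
  then have "\<nu> * \<rho> ^ Suc H \<le> \<nu> * \<rho> powr ht" using params by (intro mult_left_mono)
  ultimately show ?thesis using sup by linarith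
qed

lemma exp_gt_of_jmax_less:
  assumes "jmax L < j" "1 \<le> L"
  shows "real L < exp (real j)"
proof -
  have "ln (real L) < real j" using assms unfolding jmax_def by (simp add: nat_less_iff floor_less_iff)
  then show ?thesis using assms(2) by (metis exp_less_cancel_iff exp_ln of_nat_0_less_iff less_le_trans zero_less_one of_nat_1 of_nat_le_iff)
qed

lemma kometo_exists_near_optimal_candidate:
  assumes part: "hier_partition K P xr"
    and params: "0 < \<nu>" "0 < \<rho>" "\<rho> < 1" "d \<ge> 0" "C > 1"
    and fS: "in_S K P \<nu> \<rho> d C f"
    and approx: "strict_mono g" "\<forall>x. \<bar>f x - g (fz (zc (exp (real j))) x)\<bar> \<le> \<nu> * \<rho> powr ht"
    and ht: "ht > 0"
    and budget: "C * \<rho> powr (- d * ht) \<le> real L / (4 * ht * exp (real j))"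
    and run: "krun K fz zc xr (kschedule L) (open_flags K 0 0 (jmax L)) {(0, 0)} T Op"
    and best: "\<forall>j\<le>jmax L. (ch j, ci j, j) \<in> T \<and>
             (\<forall>h i. (h, i, j) \<in> T \<longrightarrow> kval fz zc xr h i j \<le> kval fz zc xr (ch j) (ci j) j)"
  shows "\<exists>j1\<le>jmax L. (SUP x. f x) - f (xr (ch j1) (ci j1)) \<le> 3 * \<nu> / \<rho> * \<rho> powr ht"
proof (cases "j \<le> jmax L")
  case True
  with best have "(SUP x. f x) - f (xr (ch j) (ci j)) \<le> 3 * \<nu> * \<rho> powr ht"
    by (intro kometo_level_candidate_near_optimal[OF part less_imp_le[OF params(1)] params(2-5) fS
          approx ht budget run True]) auto
  also have "\<dots> \<le> 3 * \<nu> / \<rho> * \<rho> powr ht" using params by (simp add: field_simps)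
  finally show ?thesis using True by blast
next
  case False
  then have "real L < exp (real j)"
    using kometo_budget_ge(2)[OF params(2-5) ht budget] by (intro exp_gt_of_jmax_less) auto
  with kometo_budget_ge(1)[OF params(2-5) ht budget] have "4 * ht * exp (real j) < exp (real j)"
    by linarith
  then have "ht \<le> 1" by simp
  then have "\<rho> \<le> \<rho> powr ht" using powr_mono'[of ht 1 \<rho>] params by simp
  then have "\<nu> \<le> 3 * \<nu> / \<rho> * \<rho> powr ht" using params by (simp add: field_simps)
  then show ?thesis using in_S_regret_le[OF part fS, of "xr (ch 0) (ci 0)"] by auto
qed

theorem lemma7:
  fixes K :: nat and P :: "nat \<Rightarrow> nat \<Rightarrow> 'x set" and xr :: "nat \<Rightarrow> nat \<Rightarrow> 'x"
    and \<nu> \<rho> d C :: real and f :: "'x \<Rightarrow> real"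
    and fz :: "real \<Rightarrow> 'x \<Rightarrow> real" and g :: "real \<Rightarrow> real \<Rightarrow> real"
    and \<zeta> :: "real \<Rightarrow> ereal" and lam :: "real \<Rightarrow> real" and zc :: "real \<Rightarrow> real"
    and \<Phi> \<Psi> :: "real \<Rightarrow> ereal"
    and \<Lambda> :: real and j :: nat and ht :: real and xout :: 'x
  assumes part: "hier_partition K P xr"
    and params: "\<nu> > 0" "0 < \<rho>" "\<rho> < 1" "d \<ge> 0" "C > 1"
    and fS: "in_S K P \<nu> \<rho> d C f"
    and bias: "\<forall>z\<in>{0..1}. \<zeta> z \<ge> 0 \<and> strict_mono (g z) \<and>
                 (\<forall>x. ereal \<bar>f x - g z (fz z x)\<bar> \<le> \<zeta> z)"
    and fid: "\<forall>c\<ge>1. zc c \<in> {0..1} \<and> lam (zc c) \<le> c"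
    and Phi: "\<forall>c\<ge>1. \<Phi> c = \<zeta> (zc c)"
    and Psi_mono: "\<forall>a b. 1 \<le> a \<longrightarrow> a \<le> b \<longrightarrow> \<Psi> b \<le> \<Psi> a"
    and Phi_Psi: "\<forall>c\<ge>1. \<Phi> c \<le> \<Psi> c"
    and budget: "\<Lambda> \<ge> 1"
    and ht_pos: "ht > 0"
    and cond1: "\<Psi> (exp (real j)) \<le> ereal (\<nu> * \<rho> powr ht)"
    and cond2: "real (lam_tilde K \<Lambda>) / (4 * ht * exp (real j)) \<ge> C * \<rho> powr (- d * ht)"
    and run: "kometo_output K fz zc xr \<Lambda> xout"
  shows "ereal ((SUP x. f x) - f xout)
           \<le> ereal (3 * \<nu> / \<rho> * \<rho> powr ht) + 2 * \<Psi> (real (lam_tilde K \<Lambda>))"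
proof -
  define L where "L = lam_tilde K \<Lambda>"
  obtain T Op ch ci where
    run_L: "krun K fz zc xr (kschedule L) (open_flags K 0 0 (jmax L)) {(0, 0)} T Op" and
    best: "\<forall>j\<le>jmax L. (ch j, ci j, j) \<in> T \<and>
             (\<forall>h i. (h, i, j) \<in> T \<longrightarrow> kval fz zc xr h i j \<le> kval fz zc xr (ch j) (ci j) j)" and
    out: "\<forall>j\<le>jmax L. fz (zc (real L)) (xr (ch j) (ci j)) \<le> fz (zc (real L)) xout"
    using run unfolding kometo_output_def Let_def L_def by blast
  have "1 \<le> exp (real j)" by simp
  with cond1 have "strict_mono (g (zc (exp (real j))))"
    "\<forall>x. \<bar>f x - g (zc (exp (real j))) (fz (zc (exp (real j))) x)\<bar> \<le> \<nu> * \<rho> powr ht"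
    using fidelity_approx_Psi[OF bias fid Phi Phi_Psi] by (meson ereal_less_eq(3) order.trans)+
  from kometo_exists_near_optimal_candidate[OF part params fS this ht_pos cond2[folded L_def] run_L best]
  obtain j1 where "j1 \<le> jmax L" and cand: "(SUP x. f x) - f (xr (ch j1) (ci j1)) \<le> 3 * \<nu> / \<rho> * \<rho> powr ht"
    by blast
  have "1 \<le> L" using kometo_budget_ge(2)[OF params(2-5) ht_pos cond2[folded L_def]] .
  then have "ereal ((SUP x. f x) - f xout) \<le> ereal ((SUP x. f x) - f (xr (ch j1) (ci j1))) + 2 * \<Psi> (real L)"
    using fidelity_approx_Psi[OF bias fid Phi Phi_Psi, of "real L"] out \<open>j1 \<le> jmax L\<close>
    by (intro strict_mono_approx_le_ereal[where g = "g (zc (real L))" and u = "fz (zc (real L))"]) auto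
  also have "\<dots> \<le> ereal (3 * \<nu> / \<rho> * \<rho> powr ht) + 2 * \<Psi> (real L)"
    using cand by (intro add_right_mono) simp
  finally show ?thesis unfolding L_def .
qed

end
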